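(* Let $0<\alpha\le1$, $\lambda>0$, and let $\{M_{\alpha,\lambda}(t)\}_{t\ge0}$ be a Lévy process whose marginals have Laplace transform $\mathbb{E}\, e^{-uM_{\alpha,\lambda}(t)}=\left(\frac{\lambda}{\lambda+u^{\alpha}}\right)^{t}$ for $u\ge 0$. Then for each $t>0$, $M_{\alpha,\lambda}(t)$ has a density on $(0,\infty)$ given by $$f_{M_{\alpha,\lambda}(t)}(x)=\sum_{k=0}^{\infty}(-1)^k\frac{\lambda^{t+k}\,\Gamma(t+k)}{\Gamma(t)\,\Gamma(k+1)}\,\frac{x^{\alpha(t+k)-1}}{\Gamma(\alpha(t+k))},\qquad x>0.$$ *)

theory Defs
  imports "HOL-Probability.Probability"
begin

definition levy_process :: "'a measure \<Rightarrow> (real \<Rightarrow> 'a \<Rightarrow> real) \<Rightarrow> bool" where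
  "levy_process M X \<longleftrightarrow>
     prob_space M \<and>
     (\<forall>t\<ge>0. X t \<in> borel_measurable M) \<and>
     (AE \<omega> in M. X 0 \<omega> = 0) \<and>
     (\<forall>ts::real list. sorted ts \<and> ts \<noteq> [] \<and> hd ts \<ge> 0 \<longrightarrow>
        prob_space.indep_vars M (\<lambda>_. borel)
          (\<lambda>i \<omega>. X (ts ! Suc i) \<omega> - X (ts ! i) \<omega>) {..<length ts - 1}) \<and>
     (\<forall>s\<ge>0. \<forall>t\<ge>0. distr M borel (\<lambda>\<omega>. X (s + t) \<omega> - X s \<omega>) = distr M borel (X t)) \<and>
     (\<forall>t\<ge>0. \<forall>e>0. ((\<lambda>s. measure M {\<omega> \<in> space M. \<bar>X s \<omega> - X t \<omega>\<bar> > e})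
                    \<longlongrightarrow> 0) (at t within {0..}))"

end

theory Submission
  imports Defs "HOL-Real_Asymp.Real_Asymp"
begin

(* Integrating term by term with  int_0^oo x^(b-1) e^(-u x) dx = Gamma b * u^(-b),  the Laplace
   transform of the series is  lam^t * sum_k ((-t) gchoose k) lam^k (u^alpha)^(-t-k),  which is the
   binomial series of  (lam / (lam + u^alpha))^t  as soon as  u^alpha > lam.  Conversely a law on the
   line is determined by its Laplace transform on a half-line [c, oo): its mass on (-oo, 0] vanishes
   because the transform tends to 0; tilting by e^(-c x) gives a finite measure whose moments of
   e^(-x) are values of the transform; by Weierstrass approximation these moments determine the
   integrals of all continuous functions of e^(-x), hence the measures of half-lines, hence (Dynkin)
   the measure. *)

lemma gbinomial_uminus_eq_Gamma:
  fixes t :: real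
  assumes "t > 0"
  shows "(- t) gchoose k = (-1) ^ k * Gamma (t + real k) / (Gamma t * Gamma (real k + 1))"
proof -
  have "(t + real k - 1) gchoose k = Gamma (t + real k - 1 + 1) / (fact k * Gamma (t + real k - 1 - real k + 1))"
    by (rule gbinomial_Gamma) (use assms in \<open>auto elim!: nonpos_Ints_cases\<close>)
  moreover have "Gamma (real k + 1) = fact k"
    using Gamma_fact[of k, where 'a=real] by (simp add: add.commute)
  ultimately show ?thesis
    by (simp add: gbinomial_minus)
qed

lemma summable_abs_gbinomial_powr:
  fixes a x y :: real
  assumes "\<bar>x\<bar> < y"
  shows "summable (\<lambda>n. \<bar>(a gchoose n) * x ^ n * y powr (a - real n)\<bar>)"
proof -
  define z where "z = x / y"
  have y: "y > 0" using assms by linarith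
  have "\<bar>z\<bar> < 1"
    unfolding z_def abs_divide using assms y by simp
  then have z: "norm z < norm ((1 + \<bar>z\<bar>) / 2)" "\<bar>(1 + \<bar>z\<bar>) / 2\<bar> < 1"
    by auto
  have "summable (\<lambda>n. (a gchoose n) * ((1 + \<bar>z\<bar>) / 2) ^ n)"
    using gen_binomial_real[OF z(2), of a] by (rule sums_summable)
  from powser_insidea[OF this z(1)]
  have "summable (\<lambda>n. y powr a * norm ((a gchoose n) * z ^ n))"
    by (rule summable_mult)
  moreover have "y powr a * norm ((a gchoose n) * z ^ n) = \<bar>(a gchoose n) * x ^ n * y powr (a - real n)\<bar>" for n
  proof -
    have "y powr (a - real n) = y powr a / y ^ n"
      using y by (simp add: powr_diff powr_realpow)
    then show ?thesis
      using y by (simp add: z_def abs_mult power_divide)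
  qed
  ultimately show ?thesis by (simp only:)
qed

lemma nn_integral_powr_exp:
  fixes b u :: real
  assumes b: "b > 0" and u: "u > 0"
  shows "(\<integral>\<^sup>+x. ennreal (indicator {0<..} x * x powr (b - 1) * exp (- u * x)) \<partial>lborel)
         = ennreal (Gamma b * u powr (- b))"
proof -
  have "(\<integral>\<^sup>+x. ennreal (indicator {0<..} x * x powr (b - 1) * exp (- u * x)) \<partial>lborel)
     = ennreal \<bar>1/u\<bar> * (\<integral>\<^sup>+x. ennreal (indicator {0<..} (0 + (1/u) * x) * (0 + (1/u) * x) powr (b - 1)
                                          * exp (- u * (0 + (1/u) * x))) \<partial>lborel)"
    by (rule nn_integral_real_affine) (use u in auto)
  also have "(\<lambda>x. ennreal (indicator {0<..} (0 + (1/u) * x) * (0 + (1/u) * x) powr (b - 1) * exp (- u * (0 + (1/u) * x))))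
     = (\<lambda>x. ennreal (u powr (1 - b)) * ennreal (indicator {0..} x * x powr (b - 1) / exp x))"
  proof
    fix x :: real
    show "ennreal (indicator {0<..} (0 + (1/u) * x) * (0 + (1/u) * x) powr (b - 1) * exp (- u * (0 + (1/u) * x)))
        = ennreal (u powr (1 - b)) * ennreal (indicator {0..} x * x powr (b - 1) / exp x)"
    proof (cases "x > 0")
      case True
      have "(x/u) powr (b-1) = u powr (1-b) * x powr (b-1)"
        using True u by (simp add: powr_divide powr_diff divide_simps powr_minus)
      then show ?thesis using True u
        by (simp add: ennreal_mult'[symmetric] exp_minus field_simps)
    next
      case False
      then show ?thesis using u by (auto simp: indicator_def zero_less_mult_iff zero_less_divide_iff)
    qed
  qed
  also have "(\<integral>\<^sup>+x. ennreal (u powr (1 - b)) * ennreal (indicator {0..} x * x powr (b - 1) / exp x) \<partial>lborel)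
     = ennreal (u powr (1 - b)) * ennreal (Gamma b)"
    by (subst nn_integral_cmult) (auto simp: Gamma_conv_nn_integral_real[OF b])
  also have "ennreal \<bar>1/u\<bar> * \<dots> = ennreal (Gamma b * u powr (- b))"
    using u b Gamma_real_pos[OF b]
    by (simp add: ennreal_mult'[symmetric] powr_diff powr_minus field_simps)
  finally show ?thesis .
qed

lemma
  fixes b u :: real
  assumes "b > 0" and "u > 0"
  shows integrable_powr_exp: "integrable lborel (\<lambda>x. indicator {0<..} x * x powr (b - 1) * exp (- u * x))"
    and integral_powr_exp: "(\<integral>x. indicator {0<..} x * x powr (b - 1) * exp (- u * x) \<partial>lborel) = Gamma b * u powr (- b)"
  using nn_integral_eq_integrable[of "\<lambda>x. indicator {0<..} x * x powr (b - 1) * exp (- u * x)" lborel]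
        nn_integral_powr_exp[OF assms] Gamma_real_pos[OF assms(1)] assms(2)
  by auto

lemma AE_summable_norm_if_summable_integral_norm:
  fixes f :: "nat \<Rightarrow> 'a \<Rightarrow> 'b::{banach, second_countable_topology}"
  assumes f: "\<And>i. integrable M (f i)" and summable: "summable (\<lambda>i. \<integral>x. norm (f i x) \<partial>M)"
  shows "AE x in M. summable (\<lambda>i. norm (f i x))"
proof -
  have [measurable]: "f i \<in> borel_measurable M" for i
    using f by auto
  have "(\<integral>\<^sup>+x. (\<Sum>i. ennreal (norm (f i x))) \<partial>M) = (\<Sum>i. \<integral>\<^sup>+x. ennreal (norm (f i x)) \<partial>M)"
    by (rule nn_integral_suminf) simp
  also have "\<dots> = (\<Sum>i. ennreal (\<integral>x. norm (f i x) \<partial>M))"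
    using f by (subst nn_integral_eq_integral) auto
  also have "\<dots> = ennreal (\<Sum>i. \<integral>x. norm (f i x) \<partial>M)"
    by (rule suminf_ennreal2[OF _ summable]) simp
  finally have "(\<integral>\<^sup>+x. (\<Sum>i. ennreal (norm (f i x))) \<partial>M) \<noteq> \<infinity>"
    by simp
  then have "AE x in M. (\<Sum>i. ennreal (norm (f i x))) \<noteq> \<infinity>"
    by (intro nn_integral_PInf_AE) measurable
  then show ?thesis
    by eventually_elim (rule summable_suminf_not_top, simp_all)
qed

definition gamma_powr_series :: "(nat \<Rightarrow> real) \<Rightarrow> (nat \<Rightarrow> real) \<Rightarrow> real \<Rightarrow> real" where
  "gamma_powr_series c \<beta> x = (if 0 < x then \<Sum>k. c k * x powr (\<beta> k - 1) / Gamma (\<beta> k) else 0)"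

lemma borel_measurable_gamma_powr_series [measurable]: "gamma_powr_series c \<beta> \<in> borel_measurable borel"
  unfolding gamma_powr_series_def[abs_def] by measurable

lemma
  fixes c \<beta> :: "nat \<Rightarrow> real" and u :: real
  assumes \<beta>: "\<And>k. \<beta> k > 0" and u: "u > 0" and summable: "summable (\<lambda>k. \<bar>c k * u powr (- \<beta> k)\<bar>)"
  shows integrable_laplace_gamma_powr_series: "integrable lborel (\<lambda>x. exp (- u * x) * gamma_powr_series c \<beta> x)"
    and laplace_gamma_powr_series: "(\<integral>x. exp (- u * x) * gamma_powr_series c \<beta> x \<partial>lborel) = (\<Sum>k. c k * u powr (- \<beta> k))"
proof -
  define f where "f k x = c k / Gamma (\<beta> k) * (indicator {0<..} x * x powr (\<beta> k - 1) * exp (- u * x))" for k x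
  have f_int: "integrable lborel (f k)" for k
    unfolding f_def using integrable_powr_exp[OF \<beta> u] by simp
  have f_integral: "(\<integral>x. f k x \<partial>lborel) = c k * u powr (- \<beta> k)" for k
    unfolding f_def using integral_powr_exp[OF \<beta> u] Gamma_real_pos[OF \<beta>, of k] by simp
  have "norm (f k x) = \<bar>c k\<bar> / Gamma (\<beta> k) * (indicator {0<..} x * x powr (\<beta> k - 1) * exp (- u * x))" for k x
    using Gamma_real_pos[OF \<beta>, of k] by (simp add: f_def abs_mult)
  then have "(\<integral>x. norm (f k x) \<partial>lborel) = \<bar>c k * u powr (- \<beta> k)\<bar>" for k
    using integral_powr_exp[OF \<beta> u] Gamma_real_pos[OF \<beta>, of k] by (simp add: abs_mult)
  with summable have summable_norm: "summable (\<lambda>k. \<integral>x. norm (f k x) \<partial>lborel)"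
    by simp
  have summable_AE: "AE x in lborel. summable (\<lambda>k. norm (f k x))"
    by (rule AE_summable_norm_if_summable_integral_norm[OF f_int summable_norm])
  have sum_eq: "AE x in lborel. (\<Sum>k. f k x) = exp (- u * x) * gamma_powr_series c \<beta> x"
    using summable_AE
  proof eventually_elim
    case (elim x)
    have "exp (u * x) * f k x = c k * x powr (\<beta> k - 1) / Gamma (\<beta> k)" if "x > 0" for k
      using that by (simp add: f_def exp_minus field_simps)
    then have "x > 0 \<Longrightarrow> gamma_powr_series c \<beta> x = exp (u * x) * (\<Sum>k. f k x)"
      using suminf_mult[OF summable_norm_cancel[OF elim], of "exp (u * x)"] by (simp add: gamma_powr_series_def)
    then show ?case
      by (cases "x > 0") (simp_all add: exp_minus f_def gamma_powr_series_def)
  qed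
  note f_measurable [measurable] = borel_measurable_integrable[OF f_int]
  show "integrable lborel (\<lambda>x. exp (- u * x) * gamma_powr_series c \<beta> x)"
    by (rule integrable_cong_AE_imp[OF integrable_suminf[OF f_int summable_AE summable_norm] _ sum_eq])
      measurable
  have "(\<integral>x. exp (- u * x) * gamma_powr_series c \<beta> x \<partial>lborel) = (\<integral>x. (\<Sum>k. f k x) \<partial>lborel)"
    using sum_eq by (intro integral_cong_AE) (auto elim: AE_mp)
  also have "\<dots> = (\<Sum>k. c k * u powr (- \<beta> k))"
    using integral_suminf[OF f_int summable_AE summable_norm] by (simp add: f_integral)
  finally show "(\<integral>x. exp (- u * x) * gamma_powr_series c \<beta> x \<partial>lborel) = (\<Sum>k. c k * u powr (- \<beta> k))" .
qed

definition mittag_leffler_density :: "real \<Rightarrow> real \<Rightarrow> real \<Rightarrow> real \<Rightarrow> real" where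
  "mittag_leffler_density \<alpha> lam t =
     gamma_powr_series (\<lambda>k. ((- t) gchoose k) * lam powr (t + real k)) (\<lambda>k. \<alpha> * (t + real k))"

lemma borel_measurable_mittag_leffler_density [measurable]:
  "mittag_leffler_density \<alpha> lam t \<in> borel_measurable borel"
  by (simp add: mittag_leffler_density_def)

lemma mittag_leffler_density_Gamma:
  fixes t :: real
  assumes "t > 0"
  shows "mittag_leffler_density \<alpha> lam t x =
           (if x > 0 then
              (\<Sum>k. (-1) ^ k * (lam powr (t + real k) * Gamma (t + real k))
                      / (Gamma t * Gamma (real k + 1))
                    * x powr (\<alpha> * (t + real k) - 1) / Gamma (\<alpha> * (t + real k)))
            else 0)"
  unfolding mittag_leffler_density_def gamma_powr_series_def gbinomial_uminus_eq_Gamma[OF assms]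
  by (simp add: field_simps)

lemma
  fixes \<alpha> lam t u :: real
  assumes \<alpha>: "\<alpha> > 0" and lam: "lam > 0" and t: "t > 0" and u: "u > 0" and lam_less: "lam < u powr \<alpha>"
  shows integrable_laplace_mittag_leffler_density:
      "integrable lborel (\<lambda>x. exp (- u * x) * mittag_leffler_density \<alpha> lam t x)"
    and laplace_mittag_leffler_density:
      "(\<integral>x. exp (- u * x) * mittag_leffler_density \<alpha> lam t x \<partial>lborel) = (lam / (lam + u powr \<alpha>)) powr t"
proof -
  define c where "c k = ((- t) gchoose k) * lam powr (t + real k)" for k
  define \<beta> where "\<beta> k = \<alpha> * (t + real k)" for k
  have \<beta>: "\<beta> k > 0" for k
    using \<alpha> t by (simp add: \<beta>_def)
  have c_u: "c k * u powr (- \<beta> k) = lam powr t * (((- t) gchoose k) * lam ^ k * (u powr \<alpha>) powr (- t - real k))" for k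
    using lam by (simp add: c_def \<beta>_def powr_powr powr_add powr_realpow algebra_simps)
  have lam_less': "\<bar>lam\<bar> < u powr \<alpha>"
    using lam lam_less by simp
  have "summable (\<lambda>k. lam powr t * \<bar>((- t) gchoose k) * lam ^ k * (u powr \<alpha>) powr (- t - real k)\<bar>)"
    by (intro summable_mult summable_abs_gbinomial_powr[OF lam_less'])
  then have summable: "summable (\<lambda>k. \<bar>c k * u powr (- \<beta> k)\<bar>)"
    unfolding c_u using lam by (simp add: abs_mult)
  have "(\<lambda>k. c k * u powr (- \<beta> k)) sums (lam powr t * (lam + u powr \<alpha>) powr (- t))"
    unfolding c_u by (intro sums_mult gen_binomial_real'[OF lam_less'])
  moreover have "lam powr t * (lam + u powr \<alpha>) powr (- t) = (lam / (lam + u powr \<alpha>)) powr t"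
    using lam by (simp add: powr_divide powr_minus_divide)
  moreover have "mittag_leffler_density \<alpha> lam t = gamma_powr_series c \<beta>"
    unfolding mittag_leffler_density_def c_def[abs_def] \<beta>_def[abs_def] ..
  ultimately show "integrable lborel (\<lambda>x. exp (- u * x) * mittag_leffler_density \<alpha> lam t x)"
    and "(\<integral>x. exp (- u * x) * mittag_leffler_density \<alpha> lam t x \<partial>lborel) = (lam / (lam + u powr \<alpha>)) powr t"
    using integrable_laplace_gamma_powr_series[OF \<beta> u summable]
      laplace_gamma_powr_series[OF \<beta> u summable] by (simp_all add: sums_iff)
qed

lemma integrable_continuous_comp_mult:
  fixes M :: "real measure" and \<phi> g k :: "real \<Rightarrow> real"
  assumes sets_M: "sets M = sets borel" and g: "integrable M g"
    and \<phi>: "continuous_on UNIV \<phi>" "\<And>x. \<phi> x \<in> {0..1}" and k: "continuous_on {0..1} k"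
  shows "integrable M (\<lambda>x. k (\<phi> x) * g x)"
proof -
  have "continuous_on UNIV (\<lambda>x. k (\<phi> x))"
    using continuous_on_compose2[OF k \<phi>(1)] \<phi>(2) by blast
  then have [measurable]: "(\<lambda>x. k (\<phi> x)) \<in> borel_measurable M"
    unfolding measurable_cong_sets[OF sets_M refl] by (rule borel_measurable_continuous_onI)
  have "bounded (k ` {0..1})"
    by (intro compact_imp_bounded compact_continuous_image k) simp
  then obtain B where B: "\<And>y. y \<in> {0..1} \<Longrightarrow> \<bar>k y\<bar> \<le> B"
    unfolding bounded_iff by (metis imageI real_norm_def)
  have "\<bar>k (\<phi> x)\<bar> \<le> \<bar>B\<bar>" for x
    using B[OF \<phi>(2)] by (meson abs_ge_self order_trans)
  then have "norm (k (\<phi> x) * g x) \<le> norm (B * g x)" for x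
    by (simp add: abs_mult mult_right_mono)
  moreover have "(\<lambda>x. k (\<phi> x) * g x) \<in> borel_measurable M"
    using borel_measurable_integrable[OF g] by measurable
  ultimately show ?thesis
    by (intro Bochner_Integration.integrable_bound[OF integrable_mult_right[OF g, of B]]) auto
qed

lemma abs_integral_continuous_comp_mult_le:
  fixes M :: "real measure" and \<phi> g k :: "real \<Rightarrow> real"
  assumes sets_M: "sets M = sets borel" and g: "integrable M g"
    and \<phi>: "continuous_on UNIV \<phi>" "\<And>x. \<phi> x \<in> {0..1}" and k: "continuous_on {0..1} k"
    and k_le: "\<And>y. y \<in> {0..1} \<Longrightarrow> \<bar>k y\<bar> \<le> e"
  shows "\<bar>\<integral>x. k (\<phi> x) * g x \<partial>M\<bar> \<le> e * (\<integral>x. \<bar>g x\<bar> \<partial>M)"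
proof -
  have "\<bar>\<integral>x. k (\<phi> x) * g x \<partial>M\<bar> \<le> (\<integral>x. \<bar>k (\<phi> x) * g x\<bar> \<partial>M)"
    by (rule integral_abs_bound)
  also have "\<dots> \<le> (\<integral>x. e * \<bar>g x\<bar> \<partial>M)"
  proof (rule integral_mono)
    show "integrable M (\<lambda>x. \<bar>k (\<phi> x) * g x\<bar>)"
      using integrable_continuous_comp_mult[OF assms(1-5)] by (rule integrable_abs)
    show "\<bar>k (\<phi> x) * g x\<bar> \<le> e * \<bar>g x\<bar>" for x
      using k_le[OF \<phi>(2)] by (simp add: abs_mult mult_right_mono)
  qed (use g in simp)
  finally show ?thesis
    by simp
qed

lemma integral_polynomial_comp_eq_if_moments_eq:
  fixes Q :: "real measure" and G \<phi> :: "real \<Rightarrow> real" and a :: "nat \<Rightarrow> real"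
  assumes Q: "finite_measure Q" "sets Q = sets borel" and G: "integrable lborel G"
    and \<phi>: "continuous_on UNIV \<phi>" "\<And>x. \<phi> x \<in> {0..1}"
    and moments: "\<And>n::nat. (\<integral>x. \<phi> x ^ n \<partial>Q) = (\<integral>x. \<phi> x ^ n * G x \<partial>lborel)"
  shows "(\<integral>x. (\<Sum>i\<le>m. a i * \<phi> x ^ i) \<partial>Q) = (\<integral>x. (\<Sum>i\<le>m. a i * \<phi> x ^ i) * G x \<partial>lborel)"
proof -
  have monomial: "continuous_on {0..1} (\<lambda>y::real. y ^ i)" for i :: nat
    by (intro continuous_intros)
  have "integrable Q (\<lambda>_. 1 :: real)"
    using Q(1) by (simp add: finite_measure.integrable_const)
  from integrable_continuous_comp_mult[OF Q(2) this \<phi> monomial]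
  have "(\<integral>x. (\<Sum>i\<le>m. a i * \<phi> x ^ i) \<partial>Q) = (\<Sum>i\<le>m. a i * (\<integral>x. \<phi> x ^ i \<partial>Q))"
    by (simp add: integral_sum)
  also have "\<dots> = (\<Sum>i\<le>m. a i * (\<integral>x. \<phi> x ^ i * G x \<partial>lborel))"
    by (simp add: moments)
  also have "\<dots> = (\<integral>x. (\<Sum>i\<le>m. a i * \<phi> x ^ i) * G x \<partial>lborel)"
    using integrable_continuous_comp_mult[OF _ G \<phi> monomial]
    by (simp add: integral_sum sum_distrib_right mult.assoc)
  finally show ?thesis .
qed

lemma integral_continuous_comp_eq_if_moments_eq:
  fixes Q :: "real measure" and G \<phi> h :: "real \<Rightarrow> real"
  assumes Q: "finite_measure Q" "sets Q = sets borel" and G: "integrable lborel G"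
    and \<phi>: "continuous_on UNIV \<phi>" "\<And>x. \<phi> x \<in> {0..1}"
    and moments: "\<And>n::nat. (\<integral>x. \<phi> x ^ n \<partial>Q) = (\<integral>x. \<phi> x ^ n * G x \<partial>lborel)"
    and h: "continuous_on {0..1} h"
  shows "(\<integral>x. h (\<phi> x) \<partial>Q) = (\<integral>x. h (\<phi> x) * G x \<partial>lborel)"
proof -
  interpret finite_measure Q
    by (fact Q(1))
  have one: "integrable Q (\<lambda>_. 1 :: real)"
    by simp
  define D where "D k = (\<integral>x. k (\<phi> x) * 1 \<partial>Q) - (\<integral>x. k (\<phi> x) * G x \<partial>lborel)" for k :: "real \<Rightarrow> real"
  define C where "C = measure Q (space Q) + (\<integral>x. \<bar>G x\<bar> \<partial>lborel)"
  have C: "C \<ge> 0"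
    by (simp add: C_def)
  have "\<bar>D h\<bar> \<le> 0 + e" if e: "e > 0" for e
  proof -
    obtain p where "real_polynomial_function p" and p: "\<And>y. y \<in> {0..1} \<Longrightarrow> \<bar>h y - p y\<bar> < e / (C + 1)"
      using Stone_Weierstrass_real_polynomial_function[OF _ h, of "e / (C + 1)"] e C by auto
    then obtain a m where p_eq: "p = (\<lambda>y. \<Sum>i\<le>m. a i * y ^ i)"
      using real_polynomial_function_imp_sum by blast
    have p_cont: "continuous_on {0..1} p"
      unfolding p_eq by (intro continuous_intros)
    define k where "k y = h y - p y" for y
    have k: "continuous_on {0..1} k"
      unfolding k_def by (intro continuous_intros h p_cont)
    have k_le: "\<bar>k y\<bar> \<le> e / (C + 1)" if "y \<in> {0..1}" for y
      using p[OF that] by (simp add: k_def)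
    have "\<bar>D h\<bar> = \<bar>D k\<bar>"
      using integral_polynomial_comp_eq_if_moments_eq[OF Q G \<phi> moments, of a m]
        integrable_continuous_comp_mult[OF Q(2) one \<phi> h] integrable_continuous_comp_mult[OF _ G \<phi> h]
        integrable_continuous_comp_mult[OF Q(2) one \<phi> p_cont] integrable_continuous_comp_mult[OF _ G \<phi> p_cont]
      unfolding D_def k_def by (simp add: left_diff_distrib p_eq)
    also have "\<dots> \<le> e / (C + 1) * C"
      using abs_integral_continuous_comp_mult_le[OF Q(2) one \<phi> k k_le]
        abs_integral_continuous_comp_mult_le[OF _ G \<phi> k k_le]
      by (auto simp: D_def C_def distrib_left intro!: order_trans[OF abs_triangle_ineq4] add_mono)
    also have "\<dots> \<le> e"
      using e C by (simp add: field_simps)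
    finally show ?thesis
      by simp
  qed
  then have "\<bar>D h\<bar> \<le> 0"
    by (rule field_le_epsilon)
  then show ?thesis
    by (simp add: D_def)
qed

lemma ramp_tendsto_indicator:
  fixes c y :: real
  shows "(\<lambda>m. min 1 (max 0 (real m * (c - y)))) \<longlonglongrightarrow> indicator {..<c} y"
proof (cases "y < c")
  case True
  have "eventually (\<lambda>m. min 1 (max 0 (real m * (c - y))) = 1) sequentially"
  proof (rule eventually_sequentiallyI)
    fix m assume "nat \<lceil>1 / (c - y)\<rceil> \<le> m"
    then have "1 \<le> real m * (c - y)"
      using True by (simp add: field_simps)
    then show "min 1 (max 0 (real m * (c - y))) = 1"
      by simp
  qed
  then show ?thesis
    using True by (simp add: tendsto_eventually)
next
  case False
  then show ?thesis
    by (simp add: mult_nonneg_nonpos)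
qed

lemma measure_sublevel_eq_if_moments_eq:
  fixes Q :: "real measure" and G \<phi> :: "real \<Rightarrow> real" and c :: real
  assumes Q: "finite_measure Q" "sets Q = sets borel" and G: "integrable lborel G"
    and \<phi>: "continuous_on UNIV \<phi>" "\<And>x. \<phi> x \<in> {0..1}"
    and moments: "\<And>n::nat. (\<integral>x. \<phi> x ^ n \<partial>Q) = (\<integral>x. \<phi> x ^ n * G x \<partial>lborel)"
  shows "measure Q (\<phi> -` {..<c}) = (\<integral>x. indicator (\<phi> -` {..<c}) x * G x \<partial>lborel)"
proof -
  interpret finite_measure Q
    by (fact Q(1))
  have Q_measurable: "f \<in> borel_measurable Q \<longleftrightarrow> f \<in> borel_measurable borel" for f :: "real \<Rightarrow> real"
    by (subst measurable_cong_sets[OF Q(2) refl]) (rule refl)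
  have [measurable]: "\<phi> \<in> borel_measurable borel" "G \<in> borel_measurable borel"
    using borel_measurable_continuous_onI[OF \<phi>(1)] G by auto
  define r where "r m y = min 1 (max 0 (real m * (c - y)))" for m :: nat and y :: real
  have [measurable]: "(\<lambda>x. r m (\<phi> x)) \<in> borel_measurable borel" for m
    unfolding r_def by measurable
  have r_lim: "(\<lambda>m. r m (\<phi> x)) \<longlonglongrightarrow> indicator (\<phi> -` {..<c}) x" for x
    using ramp_tendsto_indicator[of c "\<phi> x"] by (simp add: r_def indicator_def)
  have r_bound: "\<bar>r m y\<bar> \<le> 1" for m y
    by (simp add: r_def)
  have "(\<lambda>m. \<integral>x. r m (\<phi> x) \<partial>Q) \<longlonglongrightarrow> (\<integral>x. indicator (\<phi> -` {..<c}) x \<partial>Q)"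
    by (rule integral_dominated_convergence[where w = "\<lambda>_. 1"])
       (use r_lim r_bound in \<open>simp_all add: Q_measurable\<close>)
  moreover have "(\<lambda>m. \<integral>x. r m (\<phi> x) * G x \<partial>lborel) \<longlonglongrightarrow> (\<integral>x. indicator (\<phi> -` {..<c}) x * G x \<partial>lborel)"
  proof (rule integral_dominated_convergence[where w = "\<lambda>x. \<bar>G x\<bar>"])
    show "AE x in lborel. norm (r m (\<phi> x) * G x) \<le> \<bar>G x\<bar>" for m
      using r_bound by (auto simp: abs_mult intro!: mult_left_le_one_le)
    show "AE x in lborel. (\<lambda>m. r m (\<phi> x) * G x) \<longlonglongrightarrow> indicator (\<phi> -` {..<c}) x * G x"
      using r_lim by (intro AE_I2 tendsto_mult tendsto_const)
  qed (use G in auto)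
  moreover have "(\<integral>x. r m (\<phi> x) \<partial>Q) = (\<integral>x. r m (\<phi> x) * G x \<partial>lborel)" for m
    by (rule integral_continuous_comp_eq_if_moments_eq[OF Q G \<phi> moments]) (simp add: r_def continuous_intros)
  ultimately show ?thesis
    using LIMSEQ_unique sets_eq_imp_space_eq[OF Q(2)] by fastforce
qed

lemma measure_eq_integral_if_greaterThan:
  fixes Q :: "real measure" and G :: "real \<Rightarrow> real"
  assumes Q: "finite_measure Q" "sets Q = sets borel" and G: "integrable lborel G"
    and total: "measure Q UNIV = (\<integral>x. G x \<partial>lborel)"
    and greaterThan: "\<And>a. measure Q {a<..} = (\<integral>x. indicator {a<..} x * G x \<partial>lborel)"
    and A: "A \<in> sets borel"
  shows "measure Q A = (\<integral>x. indicator A x * G x \<partial>lborel)"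
proof -
  interpret finite_measure Q
    by (fact Q(1))
  have space_Q: "space Q = UNIV"
    using sets_eq_imp_space_eq[OF Q(2)] by simp
  have int_A: "integrable lborel (\<lambda>x. indicator A x * G x)" if "A \<in> sets borel" for A
    using integrable_mult_indicator[of A lborel G] that G by simp
  have generator: "sets borel = sigma_sets UNIV (range greaterThan :: real set set)"
    by (subst borel_Ioi) (simp add: sets_measure_of)
  have "{a<..} \<inter> {b<..} = {max a b<..}" for a b :: real
    by auto
  then have "Int_stable (range greaterThan :: real set set)"
    by (auto simp: Int_stable_def)
  moreover have "range greaterThan \<subseteq> Pow (UNIV :: real set)"
    by simp
  moreover have "A \<in> sigma_sets UNIV (range greaterThan)"
    using A generator by simp
  ultimately show ?thesis
  proof (induction rule: sigma_sets_induct_disjoint)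
    case (basic A)
    then show ?case
      using greaterThan by auto
  next
    case (compl A)
    have A: "A \<in> sets borel"
      using compl(1) generator by simp
    have "measure Q (UNIV - A) = measure Q UNIV - measure Q A"
      using finite_measure_compl[of A] Q(2) space_Q A by simp
    also have "\<dots> = (\<integral>x. G x - indicator A x * G x \<partial>lborel)"
      unfolding total compl(2) using int_A[OF A] G by simp
    also have "\<dots> = (\<integral>x. indicator (UNIV - A) x * G x \<partial>lborel)"
      by (rule Bochner_Integration.integral_cong[OF refl]) (auto simp: indicator_def)
    finally show ?case .
  next
    case (union A)
    have A: "A i \<in> sets borel" for i
      using union(2) generator by auto
    have "(\<lambda>i. measure Q (A i)) sums measure Q (\<Union>i. A i)"
      by (rule finite_measure_UNION) (use A Q(2) union(1) in auto)
    moreover have "(LINT x:(\<Union>i. A i)|lborel. G x) = (\<Sum>i. (LINT x:(A i)|lborel. G x))"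
    proof (rule lebesgue_integral_countable_add)
      show "A i \<inter> A j = {}" if "i \<noteq> j" for i j
        using union(1) that by (auto simp: disjoint_family_on_def)
      show "set_integrable lborel (\<Union>i. A i) G"
        unfolding set_integrable_def using int_A A by simp
    qed (use A in auto)
    ultimately show ?case
      using union(3) by (simp add: set_lebesgue_integral_def sums_iff)
  qed simp
qed

lemma AE_nonneg_if_integral_indicator_nonneg:
  fixes M :: "'a measure" and G :: "'a \<Rightarrow> real"
  assumes G: "integrable M G" and nonneg: "\<And>A. A \<in> sets M \<Longrightarrow> 0 \<le> (\<integral>x. indicator A x * G x \<partial>M)"
  shows "AE x in M. 0 \<le> G x"
proof -
  define N where "N = {x \<in> space M. G x < 0}"
  have N: "N \<in> sets M"
    unfolding N_def using G by measurable
  have "0 \<le> (\<integral>x. - (indicator N x * G x) \<partial>M)"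
    by (rule Bochner_Integration.integral_nonneg) (auto simp: N_def indicator_def)
  with nonneg[OF N] have "(\<integral>x. - (indicator N x * G x) \<partial>M) = 0"
    by simp
  then have "AE x in M. - (indicator N x * G x) = 0"
    using integrable_mult_indicator[OF N G] by (subst (asm) integral_nonneg_eq_0_iff_AE)
      (auto simp: N_def indicator_def mult_nonneg_nonpos)
  with AE_space show ?thesis
    by eventually_elim (auto simp: N_def indicator_def split: if_splits)
qed

lemma eq_density_if_measure_eq_integral:
  fixes Q :: "real measure" and G :: "real \<Rightarrow> real"
  assumes Q: "finite_measure Q" "sets Q = sets borel" and G: "integrable lborel G"
    and measure_eq: "\<And>A. A \<in> sets borel \<Longrightarrow> measure Q A = (\<integral>x. indicator A x * G x \<partial>lborel)"
  shows "Q = density lborel (\<lambda>x. ennreal (G x))"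
proof -
  interpret finite_measure Q
    by (fact Q(1))
  have int_A: "integrable lborel (\<lambda>x. indicator A x * G x)" if "A \<in> sets borel" for A
    using integrable_mult_indicator[of A lborel G] that G by simp
  have G_nonneg: "AE x in lborel. 0 \<le> G x"
    by (intro AE_nonneg_if_integral_indicator_nonneg[OF G]) (metis measure_eq measure_nonneg sets_lborel)
  show ?thesis
  proof (rule measure_eqI)
    fix A assume "A \<in> sets Q"
    then have A: "A \<in> sets borel"
      using Q(2) by simp
    have "emeasure Q A = ennreal (\<integral>x. indicator A x * G x \<partial>lborel)"
      using emeasure_eq_measure measure_eq[OF A] by simp
    also have "\<dots> = (\<integral>\<^sup>+x. ennreal (indicator A x * G x) \<partial>lborel)"
      by (rule nn_integral_eq_integral[symmetric]) (use int_A[OF A] G_nonneg in \<open>auto simp: indicator_def\<close>)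
    also have "\<dots> = (\<integral>\<^sup>+x. ennreal (G x) * indicator A x \<partial>lborel)"
      by (rule nn_integral_cong) (auto simp: indicator_def)
    also have "\<dots> = emeasure (density lborel (\<lambda>x. ennreal (G x))) A"
      using A borel_measurable_integrable[OF G] by (simp add: emeasure_density)
    finally show "emeasure Q A = emeasure (density lborel (\<lambda>x. ennreal (G x))) A" .
  qed (use Q(2) in simp)
qed

lemma eq_density_if_exp_moments_eq:
  fixes Q :: "real measure" and G :: "real \<Rightarrow> real"
  assumes Q: "finite_measure Q" "sets Q = sets borel" and Q_nonpos: "emeasure Q {..0} = 0"
    and G: "integrable lborel G" and G_nonpos: "\<And>x. x \<le> 0 \<Longrightarrow> G x = 0"
    and moments: "\<And>n::nat. (\<integral>x. exp (- max x 0) ^ n \<partial>Q) = (\<integral>x. exp (- max x 0) ^ n * G x \<partial>lborel)"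
  shows "Q = density lborel (\<lambda>x. ennreal (G x))"
proof -
  interpret finite_measure Q
    by (fact Q(1))
  have space_Q: "space Q = UNIV"
    using sets_eq_imp_space_eq[OF Q(2)] by simp
  have total: "measure Q UNIV = (\<integral>x. G x \<partial>lborel)"
    using moments[of 0] space_Q by simp
  have greaterThan: "measure Q {a<..} = (\<integral>x. indicator {a<..} x * G x \<partial>lborel)" for a
  proof (cases "a \<ge> 0")
    case True
    then have half_line: "{a<..} = (\<lambda>x. exp (- max x 0)) -` {..<exp (- a)}"
      by auto
    have "continuous_on UNIV (\<lambda>x::real. exp (- max x 0))"
      by (intro continuous_intros)
    moreover have "exp (- max x 0) \<in> {0..1}" for x :: real
      by simp
    ultimately show ?thesis
      unfolding half_line by (rule measure_sublevel_eq_if_moments_eq[OF Q G _ _ moments])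
  next
    case False
    have "measure Q {..a} \<le> measure Q {..0}"
      using False Q(2) by (intro finite_measure_mono) auto
    then have "measure Q {..a} = 0"
      using Q_nonpos by (simp add: measure_def measure_nonneg antisym)
    then have "measure Q {a<..} = measure Q UNIV"
      using finite_measure_compl[of "{..a}"] Q(2) space_Q by (simp add: Compl_eq_Diff_UNIV[symmetric] not_le)
    also have "\<dots> = (\<integral>x. indicator {a<..} x * G x \<partial>lborel)"
      unfolding total using G_nonpos False
      by (intro Bochner_Integration.integral_cong) (auto simp: indicator_def)
    finally show ?thesis .
  qed
  show ?thesis
    by (rule eq_density_if_measure_eq_integral[OF Q G measure_eq_integral_if_greaterThan[OF Q G total greaterThan]])
qed

lemma density_exp_tilt_cancel:
  fixes P :: "real measure" and c :: real
  assumes "sets P = sets borel"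
  shows "density (density P (\<lambda>x. ennreal (exp (- c * x)))) (\<lambda>x. ennreal (exp (c * x))) = P"
proof -
  have "density (density P (\<lambda>x. ennreal (exp (- c * x)))) (\<lambda>x. ennreal (exp (c * x)))
          = density P (\<lambda>x. ennreal (exp (- c * x)) * ennreal (exp (c * x)))"
    using assms by (intro density_density_eq) (auto simp: measurable_cong_sets[OF assms refl])
  also have "(\<lambda>x. ennreal (exp (- c * x)) * ennreal (exp (c * x))) = (\<lambda>_. 1)"
    by (auto simp: ennreal_mult''[symmetric] exp_add[symmetric])
  finally show ?thesis
    by (simp add: density_1)
qed

lemma finite_measure_density_exp:
  fixes P :: "real measure" and c :: real
  assumes sets_P: "sets P = sets borel" and "integrable P (\<lambda>x. exp (- c * x))"
  shows "finite_measure (density P (\<lambda>x. ennreal (exp (- c * x))))"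
proof (rule finite_measureI)
  have "emeasure (density P (\<lambda>x. ennreal (exp (- c * x)))) (space P) = (\<integral>\<^sup>+x. ennreal (exp (- c * x)) \<partial>P)"
    by (simp add: emeasure_density measurable_cong_sets[OF sets_P refl])
  also have "\<dots> = ennreal (\<integral>x. exp (- c * x) \<partial>P)"
    using assms(2) by (intro nn_integral_eq_integral) simp_all
  finally show "emeasure (density P (\<lambda>x. ennreal (exp (- c * x)))) (space (density P (\<lambda>x. ennreal (exp (- c * x))))) \<noteq> \<infinity>"
    by simp
qed

lemma integral_exp_moment_density_exp:
  fixes P :: "real measure" and c :: real
  assumes sets_P: "sets P = sets borel" and P_pos: "AE x in P. x > 0"
  shows "(\<integral>x. exp (- max x 0) ^ n \<partial>density P (\<lambda>x. ennreal (exp (- c * x)))) = (\<integral>x. exp (- (c + real n) * x) \<partial>P)"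
proof -
  have P_measurable: "f \<in> borel_measurable P \<longleftrightarrow> f \<in> borel_measurable borel" for f :: "real \<Rightarrow> real"
    by (subst measurable_cong_sets[OF sets_P refl]) (rule refl)
  have "(\<integral>x. exp (- max x 0) ^ n \<partial>density P (\<lambda>x. ennreal (exp (- c * x))))
          = (\<integral>x. exp (- c * x) * exp (- max x 0) ^ n \<partial>P)"
    by (subst integral_density) (auto simp: P_measurable)
  also have "\<dots> = (\<integral>x. exp (- (c + real n) * x) \<partial>P)"
  proof (intro integral_cong_AE)
    show "AE x in P. exp (- c * x) * exp (- max x 0) ^ n = exp (- (c + real n) * x)"
      using P_pos by eventually_elim (simp add: exp_of_nat_mult[symmetric] exp_add[symmetric] algebra_simps)
  qed (auto simp: P_measurable)
  finally show ?thesis .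
qed

lemma eq_density_if_laplace_eq:
  fixes P :: "real measure" and g :: "real \<Rightarrow> real" and c :: real
  assumes sets_P: "sets P = sets borel" and P_nonpos: "emeasure P {..0} = 0"
    and g_nonpos: "\<And>x. x \<le> 0 \<Longrightarrow> g x = 0"
    and laplace: "\<And>u. u \<ge> c \<Longrightarrow> integrable P (\<lambda>x. exp (- u * x)) \<and>
                    integrable lborel (\<lambda>x. exp (- u * x) * g x) \<and>
                    (\<integral>x. exp (- u * x) \<partial>P) = (\<integral>x. exp (- u * x) * g x \<partial>lborel)"
  shows "P = density lborel (\<lambda>x. ennreal (g x))"
proof -
  define Q where "Q = density P (\<lambda>x. ennreal (exp (- c * x)))"
  define G where "G x = exp (- c * x) * g x" for x
  have P_pos: "AE x in P. x > 0"
    by (rule AE_I'[of "{..0}"]) (use P_nonpos sets_P in \<open>auto simp: null_sets_def\<close>)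
  have "{..0} \<in> null_sets Q"
    unfolding Q_def using P_pos sets_P
    by (subst null_sets_density_iff) (auto simp: measurable_cong_sets[OF sets_P refl] elim: AE_mp)
  then have Q_nonpos: "emeasure Q {..0} = 0"
    by auto
  have G: "integrable lborel G"
    using laplace[of c] by (simp add: G_def[abs_def])
  have moments: "(\<integral>x. exp (- max x 0) ^ n \<partial>Q) = (\<integral>x. exp (- max x 0) ^ n * G x \<partial>lborel)" for n :: nat
  proof -
    have "exp (- (c + real n) * x) * g x = exp (- max x 0) ^ n * G x" for x
      using g_nonpos[of x] by (cases "x > 0") (simp_all add: G_def exp_of_nat_mult[symmetric] exp_add[symmetric] algebra_simps)
    then show ?thesis
      using laplace[of "c + real n"] unfolding Q_def integral_exp_moment_density_exp[OF sets_P P_pos] by simp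
  qed
  have "finite_measure Q"
    unfolding Q_def using laplace[of c] by (intro finite_measure_density_exp[OF sets_P]) simp
  moreover have "sets Q = sets borel"
    by (simp add: Q_def sets_P)
  ultimately have "Q = density lborel (\<lambda>x. ennreal (G x))"
    using G_def g_nonpos by (intro eq_density_if_exp_moments_eq[OF _ _ Q_nonpos G _ moments]) auto
  then have "density Q (\<lambda>x. ennreal (exp (c * x))) = density lborel (\<lambda>x. ennreal (G x) * ennreal (exp (c * x)))"
    using borel_measurable_integrable[OF G] by (simp add: density_density_eq)
  moreover have "ennreal (G x) * ennreal (exp (c * x)) = ennreal (g x)" for x
  proof -
    have "G x * exp (c * x) = g x"
      by (simp add: G_def exp_minus)
    then show ?thesis
      by (metis ennreal_mult'' exp_ge_zero)
  qed
  ultimately show ?thesis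
    unfolding Q_def density_exp_tilt_cancel[OF sets_P] by simp
qed

lemma emeasure_nonpos_eq_0_if_laplace_tendsto_0:
  fixes P :: "real measure"
  assumes P: "finite_measure P" "sets P = sets borel"
    and integrable: "\<And>u. u \<ge> 0 \<Longrightarrow> integrable P (\<lambda>x. exp (- u * x))"
    and lim: "((\<lambda>u. \<integral>x. exp (- u * x) \<partial>P) \<longlongrightarrow> 0) at_top"
  shows "emeasure P {..0} = 0"
proof -
  interpret finite_measure P
    by (fact P(1))
  have "measure P {..0} \<le> (\<integral>x. exp (- u * x) \<partial>P)" if u: "u \<ge> 0" for u
  proof -
    have "measure P {..0} = (\<integral>x. indicator {..0} x \<partial>P)"
      using sets_eq_imp_space_eq[OF P(2)] by simp
    also have "\<dots> \<le> (\<integral>x. exp (- u * x) \<partial>P)"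
    proof (rule integral_mono)
      show "integrable P (indicator {..0} :: real \<Rightarrow> real)"
        using P(2) by (intro integrable_const_bound[where B=1]) (auto simp: measurable_cong_sets[OF P(2) refl])
      show "indicator {..0} x \<le> exp (- u * x)" for x :: real
        using u by (auto simp: indicator_def mult_nonneg_nonpos)
    qed (fact integrable[OF u])
    finally show ?thesis .
  qed
  then have "measure P {..0} \<le> 0"
    by (intro tendsto_lowerbound[OF lim]) (auto intro: eventually_mono[OF eventually_ge_at_top[of 0]])
  then show ?thesis
    by (simp add: emeasure_eq_measure measure_le_0_iff)
qed

lemma eq_mittag_leffler_density_if_laplace:
  fixes P :: "real measure" and \<alpha> lam t :: real
  assumes \<alpha>: "\<alpha> > 0" and lam: "lam > 0" and t: "t > 0"
    and P: "finite_measure P" "sets P = sets borel"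
    and laplace_P: "\<And>u. u \<ge> 0 \<Longrightarrow> integrable P (\<lambda>x. exp (- u * x)) \<and>
                      (\<integral>x. exp (- u * x) \<partial>P) = (lam / (lam + u powr \<alpha>)) powr t"
  shows "P = density lborel (\<lambda>x. ennreal (mittag_leffler_density \<alpha> lam t x))"
proof -
  have "((\<lambda>u. (lam / (lam + u powr \<alpha>)) powr t) \<longlongrightarrow> 0) at_top"
    using \<alpha> lam t by real_asymp
  then have "((\<lambda>u. \<integral>x. exp (- u * x) \<partial>P) \<longlongrightarrow> 0) at_top"
    by (rule Lim_transform_eventually) (use laplace_P in \<open>auto intro: eventually_mono[OF eventually_ge_at_top[of 0]]\<close>)
  then have P_nonpos: "emeasure P {..0} = 0"
    using laplace_P by (intro emeasure_nonpos_eq_0_if_laplace_tendsto_0[OF P]) auto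
  \<comment> \<open>any c with lam < c powr \<alpha> will do: beyond it the binomial series of the transform converges\<close>
  define c where "c = (2 * lam) powr (1 / \<alpha>)"
  have c: "c > 0" "lam < c powr \<alpha>"
    using \<alpha> lam by (simp_all add: c_def powr_powr)
  have "lam < u powr \<alpha>" if "u \<ge> c" for u
    using c powr_mono2[of \<alpha> c u] \<alpha> that by simp
  then show ?thesis
    using c(1) laplace_P integrable_laplace_mittag_leffler_density[OF \<alpha> lam t]
      laplace_mittag_leffler_density[OF \<alpha> lam t]
    by (intro eq_density_if_laplace_eq[OF P(2) P_nonpos, where c = c])
      (auto simp: mittag_leffler_density_def gamma_powr_series_def)
qed

theorem mainTheorem2:
  fixes M :: "'a measure" and X :: "real \<Rightarrow> 'a \<Rightarrow> real"
    and \<alpha> lam :: real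
  assumes "0 < \<alpha>" and "\<alpha> \<le> 1" and "0 < lam"
    and "levy_process M X"
    and "\<And>t u. t \<ge> 0 \<Longrightarrow> u \<ge> 0 \<Longrightarrow>
           integrable M (\<lambda>\<omega>. exp (- u * X t \<omega>)) \<and>
           (\<integral>\<omega>. exp (- u * X t \<omega>) \<partial>M) = (lam / (lam + u powr \<alpha>)) powr t"
    and "t > 0"
  shows "distributed M lborel (X t)
           (\<lambda>x. ennreal (if x > 0 then
              (\<Sum>k. (-1) ^ k * (lam powr (t + real k) * Gamma (t + real k))
                      / (Gamma t * Gamma (real k + 1))
                    * x powr (\<alpha> * (t + real k) - 1) / Gamma (\<alpha> * (t + real k)))
            else 0))"
proof -
  have "prob_space M" and X_borel: "X t \<in> borel_measurable M"
    using assms(4,6) unfolding levy_process_def by auto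
  interpret prob_space M
    by fact
  have X: "X t \<in> measurable M lborel"
    using X_borel by (subst measurable_cong_sets[OF refl sets_lborel])
  have "integrable (distr M lborel (X t)) (\<lambda>x. exp (- u * x)) \<and>
          (\<integral>x. exp (- u * x) \<partial>distr M lborel (X t)) = (lam / (lam + u powr \<alpha>)) powr t" if "u \<ge> 0" for u
    using assms(5)[of t u] assms(6) that
    by (simp add: integrable_distr_eq[OF X] integral_distr[OF X])
  then have "distr M lborel (X t) = density lborel (\<lambda>x. ennreal (mittag_leffler_density \<alpha> lam t x))"
    using assms(1,3,6) finite_measure_distr[OF X] by (intro eq_mittag_leffler_density_if_laplace) auto
  then show ?thesis
    unfolding distributed_def mittag_leffler_density_Gamma[OF assms(6), symmetric] using X_borel by simp
qed

end
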